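(* Let $M$ be a mechanism that is $\delta$-Pareto efficient in all equilibria, and let $k$ be a positive integer. Let $M^k$ be the mechanism which, on a collection $A$ of $n$ alternatives, acts as $M$ acting on the collection $k$-$UN(A)$ (i.e., the players use the signals of $M$ for the collection $k$-$UN(A)$, $M$ selects a random element of $k$-$UN(A)$, i.e. a $k$-uniform distribution, and the final index is drawn from it). Then $M^k$ is $(\delta+\frac1k)$-close to the Pareto frontier in all equilibria.
   Context: Two players bargain over a collection (multiset) $A=(a^j)_{j\in[n]}\subset[0,1]^2$, $a^j_i$ being player $i$'s utility. A mechanism $M=(M_n)_n$ specifies for each $n$ signal sets $\Sigma_1(n),\Sigma_2(n)$ and a map $f_n:\Sigma_1(n)\times\Sigma_2(n)\to\Delta([n])$; with risk-neutral players it induces a game $\Gamma_M(A)$ with expected-utility payoffs, and $NEO_M(A)$ denotes its set of pure Nash equilibrium outcomes (expected utility vectors). A $k$-uniform distribution over $[n]$ is the uniform distribution over a multiset of size $k$ from $[n]$; $k$-$UN(A)$ is the collection, indexed by the $k$-uniform distributions $\mu$, of the points $\mathbb{E}_{j\sim\mu}[a^j]$. An allocation $x$ is $\varepsilon$-Pareto efficient w.r.t. a collection $C$ if no $c\in C$ has $c_1>x_1+\varepsilon$ and $c_2>x_2+\varepsilon$; $M$ is $\varepsilon$-Pareto efficient in all equilibria if for every collection $C$ every $x\in NEO_M(C)$ is $\varepsilon$-Pareto efficient w.r.t. $C$. $x$ is $\varepsilon$-close to the Pareto frontier of $A$ if no $y\in\mathrm{conv}(A)$ has $y_1>x_1+\varepsilon$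 and $y_2>x_2+\varepsilon$; a mechanism is $\varepsilon$-close to the Pareto frontier in all equilibria if for every collection $A$ every $x\in NEO(A)$ is $\varepsilon$-close to the Pareto frontier of $A$. *)

theory Defs
  imports "HOL-Analysis.Analysis" "HOL-Library.Multiset"
begin

text \<open>A collection of n alternatives is a map A :: nat => real * real, A j = a^j for j < n,
  with all utilities in [0,1]. Collections are nonempty (Delta([0]) is empty).\<close>
definition collection :: "nat \<Rightarrow> (nat \<Rightarrow> real \<times> real) \<Rightarrow> bool" where
  "collection n A \<longleftrightarrow> n \<ge> 1 \<and> (\<forall>j<n. A j \<in> {0..1} \<times> {0..1})"

definition is_distrib :: "nat \<Rightarrow> (nat \<Rightarrow> real) \<Rightarrow> bool" where
  "is_distrib n p \<longleftrightarrow> (\<forall>j<n. p j \<ge> 0) \<and> (\<Sum>j<n. p j) = 1"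

definition mechanism ::
  "(nat \<Rightarrow> 's1 set) \<Rightarrow> (nat \<Rightarrow> 's2 set) \<Rightarrow> (nat \<Rightarrow> 's1 \<Rightarrow> 's2 \<Rightarrow> nat \<Rightarrow> real) \<Rightarrow> bool" where
  "mechanism S1 S2 f \<longleftrightarrow>
     (\<forall>n\<ge>1. \<forall>s1\<in>S1 n. \<forall>s2\<in>S2 n. is_distrib n (f n s1 s2))"

definition payoff ::
  "(nat \<Rightarrow> 's1 \<Rightarrow> 's2 \<Rightarrow> nat \<Rightarrow> real) \<Rightarrow> nat \<Rightarrow> (nat \<Rightarrow> real \<times> real) \<Rightarrow> 's1 \<Rightarrow> 's2 \<Rightarrow> real \<times> real" where
  "payoff f n A s1 s2 = (\<Sum>j<n. f n s1 s2 j *\<^sub>R A j)"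

definition NEO ::
  "(nat \<Rightarrow> 's1 set) \<Rightarrow> (nat \<Rightarrow> 's2 set) \<Rightarrow> (nat \<Rightarrow> 's1 \<Rightarrow> 's2 \<Rightarrow> nat \<Rightarrow> real)
   \<Rightarrow> nat \<Rightarrow> (nat \<Rightarrow> real \<times> real) \<Rightarrow> (real \<times> real) set" where
  "NEO S1 S2 f n A =
     {payoff f n A s1 s2 | s1 s2. s1 \<in> S1 n \<and> s2 \<in> S2 n \<and>
        (\<forall>t1\<in>S1 n. fst (payoff f n A t1 s2) \<le> fst (payoff f n A s1 s2)) \<and>
        (\<forall>t2\<in>S2 n. snd (payoff f n A s1 t2) \<le> snd (payoff f n A s1 s2))}"

definition eps_pareto_eff :: "real \<Rightarrow> nat \<Rightarrow> (nat \<Rightarrow> real \<times> real) \<Rightarrow> real \<times> real \<Rightarrow> bool" where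
  "eps_pareto_eff eps n C x \<longleftrightarrow>
     \<not> (\<exists>l<n. fst (C l) > fst x + eps \<and> snd (C l) > snd x + eps)"

definition pareto_eff_all_eq ::
  "(nat \<Rightarrow> 's1 set) \<Rightarrow> (nat \<Rightarrow> 's2 set) \<Rightarrow> (nat \<Rightarrow> 's1 \<Rightarrow> 's2 \<Rightarrow> nat \<Rightarrow> real) \<Rightarrow> real \<Rightarrow> bool" where
  "pareto_eff_all_eq S1 S2 f eps \<longleftrightarrow>
     (\<forall>n C. collection n C \<longrightarrow> (\<forall>x\<in>NEO S1 S2 f n C. eps_pareto_eff eps n C x))"

definition eps_close_frontier :: "real \<Rightarrow> nat \<Rightarrow> (nat \<Rightarrow> real \<times> real) \<Rightarrow> real \<times> real \<Rightarrow> bool" where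
  "eps_close_frontier eps n A x \<longleftrightarrow>
     \<not> (\<exists>y\<in>convex hull (A ` {..<n}). fst y > fst x + eps \<and> snd y > snd x + eps)"

definition close_frontier_all_eq ::
  "(nat \<Rightarrow> 's1 set) \<Rightarrow> (nat \<Rightarrow> 's2 set) \<Rightarrow> (nat \<Rightarrow> 's1 \<Rightarrow> 's2 \<Rightarrow> nat \<Rightarrow> real) \<Rightarrow> real \<Rightarrow> bool" where
  "close_frontier_all_eq S1 S2 f eps \<longleftrightarrow>
     (\<forall>n A. collection n A \<longrightarrow> (\<forall>x\<in>NEO S1 S2 f n A. eps_close_frontier eps n A x))"

text \<open>k-uniform distributions over [n], represented by multisets of size k from [n].\<close>
definition kmsets :: "nat \<Rightarrow> nat \<Rightarrow> nat multiset set" where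
  "kmsets k n = {X. set_mset X \<subseteq> {..<n} \<and> size X = k}"

definition num_kun :: "nat \<Rightarrow> nat \<Rightarrow> nat" where
  "num_kun k n = card (kmsets k n)"

text \<open>k-UN(A), indexed via an enumeration e n : [num_kun k n] -> kmsets k n:
  entry l is E_{j ~ mu_l}[a^j] where mu_l is the uniform distribution over the multiset e n l.\<close>
definition kUN :: "nat \<Rightarrow> (nat \<Rightarrow> nat \<Rightarrow> nat multiset) \<Rightarrow> nat \<Rightarrow> (nat \<Rightarrow> real \<times> real) \<Rightarrow> nat \<Rightarrow> real \<times> real" where
  "kUN k e n A l = (\<Sum>j<n. (real (count (e n l) j) / real k) *\<^sub>R A j)"

text \<open>The mechanism M^k: signals of M for k-UN(A); M selects l, i.e. the k-uniform
  distribution e n l, from which the final index j is drawn.\<close>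
definition Mk_S1 :: "(nat \<Rightarrow> 's1 set) \<Rightarrow> nat \<Rightarrow> nat \<Rightarrow> 's1 set" where
  "Mk_S1 S1 k n = S1 (num_kun k n)"

definition Mk_S2 :: "(nat \<Rightarrow> 's2 set) \<Rightarrow> nat \<Rightarrow> nat \<Rightarrow> 's2 set" where
  "Mk_S2 S2 k n = S2 (num_kun k n)"

definition Mk_f ::
  "(nat \<Rightarrow> 's1 \<Rightarrow> 's2 \<Rightarrow> nat \<Rightarrow> real) \<Rightarrow> nat \<Rightarrow> (nat \<Rightarrow> nat \<Rightarrow> nat multiset)
   \<Rightarrow> nat \<Rightarrow> 's1 \<Rightarrow> 's2 \<Rightarrow> nat \<Rightarrow> real" where
  "Mk_f f k e n s1 s2 j =
     (\<Sum>l<num_kun k n. f (num_kun k n) s1 s2 l * (real (count (e n l) j) / real k))"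

end

theory Submission
  imports Defs
begin

text \<open>The mechanism \<open>M\<^sup>k\<close> played on \<open>A\<close> is literally \<open>M\<close> played on \<open>k-UN(A)\<close>, so its
  equilibrium outcomes are \<open>\<delta>\<close>-Pareto efficient with respect to the \<open>k\<close>-uniform averages.
  It remains to see that every point \<open>y\<close> of the convex hull of \<open>A\<close> is dominated up to \<open>1/k\<close> in
  both coordinates by some \<open>k\<close>-uniform average. By Caratheodory in the plane, \<open>y\<close> is a convex
  combination \<open>u\<^sub>1 a\<^sub>1 + u\<^sub>2 a\<^sub>2 + u\<^sub>3 a\<^sub>3\<close>. Rounding the cumulative masses \<open>k u\<^sub>1\<close> and
  \<open>k (u\<^sub>1 + u\<^sub>2)\<close> down to integers gives counts \<open>c\<^sub>i\<close> summing to \<open>k\<close> with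
  \<open>k y - (c\<^sub>1 a\<^sub>1 + c\<^sub>2 a\<^sub>2 + c\<^sub>3 a\<^sub>3) \<le> max \<phi>\<^sub>1 \<phi>\<^sub>2 < 1\<close> in each coordinate, where the \<open>\<phi>\<^sub>i\<close> are
  the two fractional parts and the coordinates of the \<open>a\<^sub>i\<close> lie in \<open>[0,1]\<close>.\<close>

definition mset_average :: "nat \<Rightarrow> nat \<Rightarrow> (nat \<Rightarrow> 'a::real_vector) \<Rightarrow> nat multiset \<Rightarrow> 'a" where
  "mset_average k n A X = (\<Sum>j<n. (real (count X j) / real k) *\<^sub>R A j)"

lemma kUN_eq_mset_average: "kUN k e n A l = mset_average k n A (e n l)"
  by (simp add: kUN_def mset_average_def)

lemma sum_count_scaleR_eq_sum_mset:
  fixes v :: "nat \<Rightarrow> 'a::real_vector"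
  assumes "set_mset X \<subseteq> {..<n}"
  shows "(\<Sum>j<n. real (count X j) *\<^sub>R v j) = (\<Sum>x\<in>#X. v x)"
  using assms
proof (induction X)
  case empty
  then show ?case by simp
next
  case (add a X)
  have "real (count (add_mset a X) j) *\<^sub>R v j = real (count X j) *\<^sub>R v j + (if a = j then v j else 0)"
    for j by (simp add: scaleR_add_left)
  then have "(\<Sum>j<n. real (count (add_mset a X) j) *\<^sub>R v j)
      = (\<Sum>j<n. real (count X j) *\<^sub>R v j) + (\<Sum>j<n. if a = j then v j else 0)"
    by (simp only: sum.distrib)
  with add show ?case by simp
qed

lemma mset_average_eq_sum_mset:
  assumes "set_mset X \<subseteq> {..<n}"
  shows "mset_average k n A X = (\<Sum>x\<in>#X. A x) /\<^sub>R real k"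
proof -
  have "mset_average k n A X = (\<Sum>j<n. real (count X j) *\<^sub>R A j) /\<^sub>R real k"
    by (simp add: mset_average_def scaleR_sum_right divide_inverse_commute)
  then show ?thesis
    by (simp only: sum_count_scaleR_eq_sum_mset[OF assms])
qed

lemma sum_mset_replicate_mset_scaleR: "sum_mset (replicate_mset c v) = real c *\<^sub>R (v :: 'a::real_vector)"
  by (induction c) (simp_all add: scaleR_add_left)

lemma sum_count_kmsets:
  assumes "X \<in> kmsets k n"
  shows "(\<Sum>j<n. real (count X j)) = real k"
proof -
  have "(\<Sum>j<n. real (count X j) *\<^sub>R 1) = (\<Sum>x\<in>#X. 1 :: real)"
    using assms by (intro sum_count_scaleR_eq_sum_mset) (simp add: kmsets_def)
  then show ?thesis
    using assms by (simp add: kmsets_def)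
qed

lemma mset_average_kmsets_in_convex:
  assumes "X \<in> kmsets k n" "k > 0" "convex C" "\<forall>j<n. A j \<in> C"
  shows "mset_average k n A X \<in> C"
  unfolding mset_average_def
proof (rule convex_sum)
  show "(\<Sum>j<n. real (count X j) / real k) = 1"
    using sum_count_kmsets[OF assms(1)] assms(2) by (simp flip: sum_divide_distrib)
qed (use assms in auto)

lemma collection_kUN:
  assumes "collection n A" "k > 0" "bij_betw (e n) {..<num_kun k n} (kmsets k n)"
  shows "collection (num_kun k n) (kUN k e n A)"
proof -
  have "replicate_mset k 0 \<in> kmsets k n"
    using assms(1) by (simp add: kmsets_def collection_def)
  then have "{..<num_kun k n} \<noteq> {}"
    using bij_betw_imp_surj_on[OF assms(3)] by auto
  then have "num_kun k n \<ge> 1"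
    by (simp add: Suc_le_eq lessThan_empty_iff)
  moreover have "kUN k e n A l \<in> {0..1} \<times> {0..1}" if "l < num_kun k n" for l
    unfolding kUN_eq_mset_average
    by (rule mset_average_kmsets_in_convex)
       (use assms that bij_betwE in \<open>auto simp: collection_def convex_Times\<close>)
  ultimately show ?thesis by (simp add: collection_def)
qed

lemma payoff_Mk_f: "payoff (Mk_f f k e) n A s1 s2 = payoff f (num_kun k n) (kUN k e n A) s1 s2"
proof -
  have "payoff (Mk_f f k e) n A s1 s2
      = (\<Sum>j<n. \<Sum>l<num_kun k n. f (num_kun k n) s1 s2 l *\<^sub>R (real (count (e n l) j) / real k) *\<^sub>R A j)"
    by (simp add: payoff_def Mk_f_def scaleR_sum_left)
  also have "\<dots> = payoff f (num_kun k n) (kUN k e n A) s1 s2"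
    by (subst sum.swap) (simp add: payoff_def kUN_def scaleR_sum_right)
  finally show ?thesis .
qed

lemma NEO_Mk: "NEO (Mk_S1 S1 k) (Mk_S2 S2 k) (Mk_f f k e) n A = NEO S1 S2 f (num_kun k n) (kUN k e n A)"
  by (simp add: NEO_def Mk_S1_def Mk_S2_def payoff_Mk_f)

lemma finite_nonempty_card_le_3E:
  assumes "finite S" "S \<noteq> {}" "card S \<le> 3"
  obtains a b c where "S = {a, b, c}"
proof -
  obtain xs where xs: "set xs = S" "distinct xs"
    using finite_distinct_list[OF assms(1)] by blast
  then have "length xs \<le> 3" "xs \<noteq> []"
    using assms distinct_card by fastforce+
  then consider a where "xs = [a]" | a b where "xs = [a, b]" | a b c where "xs = [a, b, c]"
    by (auto simp: numeral_eq_Suc le_Suc_eq length_Suc_conv)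
  then show ?thesis using that xs(1) by cases auto
qed

lemma convex_hull_image_plane_three:
  fixes A :: "'i \<Rightarrow> real \<times> real"
  assumes "y \<in> convex hull (A ` I)"
  obtains i1 i2 i3 u1 u2 u3 where "i1 \<in> I" "i2 \<in> I" "i3 \<in> I"
    and "0 \<le> u1" "0 \<le> u2" "0 \<le> u3" "u1 + u2 + u3 = 1"
    and "y = u1 *\<^sub>R A i1 + u2 *\<^sub>R A i2 + u3 *\<^sub>R A i3"
proof -
  obtain S where S: "finite S" "S \<subseteq> A ` I" "card S \<le> 3" "y \<in> convex hull S"
    using assms unfolding caratheodory[of "A ` I"] by auto
  have "S \<noteq> {}"
    using S(4) by auto
  then obtain a b c where abc: "S = {a, b, c}"
    by (rule finite_nonempty_card_le_3E[OF S(1) _ S(3)])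
  then have "a \<in> A ` I" "b \<in> A ` I" "c \<in> A ` I"
    using S(2) by auto
  then obtain i1 i2 i3 where "i1 \<in> I" "i2 \<in> I" "i3 \<in> I" "a = A i1" "b = A i2" "c = A i3"
    by (elim imageE)
  moreover have "y \<in> convex hull {A i1, A i2, A i3}"
    using S(4) abc calculation by simp
  ultimately show ?thesis
    using that unfolding convex_hull_3 by blast
qed

lemma rounding_error_three:
  fixes \<phi>1 \<phi>2 a1 a2 a3 :: real
  assumes "0 \<le> \<phi>1" "\<phi>1 < 1" "0 \<le> \<phi>2" "\<phi>2 < 1"
    and "0 \<le> a1" "a1 \<le> 1" "0 \<le> a2" "a2 \<le> 1" "0 \<le> a3" "a3 \<le> 1"
  shows "\<phi>1 * a1 + (\<phi>2 - \<phi>1) * a2 - \<phi>2 * a3 < 1"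
proof -
  have "\<phi>1 * a1 \<le> \<phi>1" "0 \<le> \<phi>2 * a3"
    by (simp_all add: assms mult_left_le)
  moreover have "(\<phi>2 - \<phi>1) * a2 \<le> max (\<phi>2 - \<phi>1) 0"
    using assms by (cases "\<phi>1 \<le> \<phi>2") (auto simp: mult_left_le mult_nonpos_nonneg)
  ultimately show ?thesis
    using assms by linarith
qed

lemma cumulative_rounding_three:
  fixes u1 u2 u3 :: real and k :: nat
  assumes "0 \<le> u1" "0 \<le> u2" "0 \<le> u3" "u1 + u2 + u3 = 1"
  obtains c1 c2 c3 :: nat where "c1 + c2 + c3 = k"
    and "\<And>a1 a2 a3. 0 \<le> a1 \<Longrightarrow> a1 \<le> 1 \<Longrightarrow> 0 \<le> a2 \<Longrightarrow> a2 \<le> 1 \<Longrightarrow> 0 \<le> a3 \<Longrightarrow> a3 \<le> 1 \<Longrightarrow>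
           real k * (u1 * a1 + u2 * a2 + u3 * a3) - 1 < real c1 * a1 + real c2 * a2 + real c3 * a3"
proof -
  define g1 where "g1 = \<lfloor>real k * u1\<rfloor>"
  define g2 where "g2 = \<lfloor>real k * (u1 + u2)\<rfloor>"
  have "0 \<le> g1"
    using assms(1) by (simp add: g1_def)
  moreover have "g1 \<le> g2"
    using assms(2) unfolding g1_def g2_def by (intro floor_mono mult_left_mono) simp_all
  moreover have "real k * (u1 + u2) \<le> real k"
    using assms(3,4) by (simp add: mult_left_le)
  then have "g2 \<le> int k"
    unfolding g2_def by (metis floor_mono floor_of_nat)
  ultimately have bounds: "0 \<le> g1" "g1 \<le> g2" "g2 \<le> int k"
    by blast+
  then have counts: "real (nat g1) = g1" "real (nat (g2 - g1)) = g2 - g1" "real (k - nat g2) = k - g2"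
    by (simp_all add: of_nat_diff)
  show ?thesis
  proof
    show "nat g1 + nat (g2 - g1) + (k - nat g2) = k"
      using bounds by linarith
    fix a1 a2 a3 :: real
    assume a: "0 \<le> a1" "a1 \<le> 1" "0 \<le> a2" "a2 \<le> 1" "0 \<le> a3" "a3 \<le> 1"
    have "u3 = 1 - u1 - u2"
      using assms(4) by simp
    define \<phi>1 where "\<phi>1 = real k * u1 - g1"
    define \<phi>2 where "\<phi>2 = real k * (u1 + u2) - g2"
    have "0 \<le> \<phi>1" "\<phi>1 < 1" "0 \<le> \<phi>2" "\<phi>2 < 1"
      unfolding \<phi>1_def \<phi>2_def g1_def g2_def by linarith+
    then have "\<phi>1 * a1 + (\<phi>2 - \<phi>1) * a2 - \<phi>2 * a3 < 1"
      using a by (rule rounding_error_three)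
    moreover have "real k * (u1 * a1 + u2 * a2 + u3 * a3)
        - (real (nat g1) * a1 + real (nat (g2 - g1)) * a2 + real (k - nat g2) * a3)
        = \<phi>1 * a1 + (\<phi>2 - \<phi>1) * a2 - \<phi>2 * a3"
      unfolding counts \<phi>1_def \<phi>2_def \<open>u3 = 1 - u1 - u2\<close> by (simp add: algebra_simps)
    ultimately show "real k * (u1 * a1 + u2 * a2 + u3 * a3) - 1
        < real (nat g1) * a1 + real (nat (g2 - g1)) * a2 + real (k - nat g2) * a3"
      by linarith
  qed
qed

lemma convex_hull_approx_by_mset_average:
  fixes A :: "nat \<Rightarrow> real \<times> real"
  assumes box: "\<forall>j<n. A j \<in> {0..1} \<times> {0..1}" and "k > 0" and "y \<in> convex hull (A ` {..<n})"
  obtains X where "X \<in> kmsets k n"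
    and "fst y - 1 / real k < fst (mset_average k n A X)"
    and "snd y - 1 / real k < snd (mset_average k n A X)"
proof -
  obtain j1 j2 j3 u1 u2 u3 where j: "j1 < n" "j2 < n" "j3 < n"
    and u: "0 \<le> u1" "0 \<le> u2" "0 \<le> u3" "u1 + u2 + u3 = 1"
    and y: "y = u1 *\<^sub>R A j1 + u2 *\<^sub>R A j2 + u3 *\<^sub>R A j3"
    using convex_hull_image_plane_three[OF assms(3)] by (metis lessThan_iff)
  obtain c1 c2 c3 where c: "c1 + c2 + c3 = k"
    and round: "\<And>a1 a2 a3. 0 \<le> a1 \<Longrightarrow> a1 \<le> 1 \<Longrightarrow> 0 \<le> a2 \<Longrightarrow> a2 \<le> 1 \<Longrightarrow> 0 \<le> a3 \<Longrightarrow> a3 \<le> 1 \<Longrightarrow>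
           real k * (u1 * a1 + u2 * a2 + u3 * a3) - 1 < real c1 * a1 + real c2 * a2 + real c3 * a3"
    using cumulative_rounding_three[OF u] by metis
  define X where "X = replicate_mset c1 j1 + replicate_mset c2 j2 + replicate_mset c3 j3"
  have X: "X \<in> kmsets k n"
    using c j by (auto simp: X_def kmsets_def)
  have avg: "mset_average k n A X = (real c1 *\<^sub>R A j1 + real c2 *\<^sub>R A j2 + real c3 *\<^sub>R A j3) /\<^sub>R real k"
    using X by (simp add: mset_average_eq_sum_mset kmsets_def X_def sum_mset_replicate_mset_scaleR)
  then have kavg: "real k *\<^sub>R mset_average k n A X = real c1 *\<^sub>R A j1 + real c2 *\<^sub>R A j2 + real c3 *\<^sub>R A j3"
    using \<open>k > 0\<close> by simp
  have "real k * fst y - 1 < fst (real k *\<^sub>R mset_average k n A X)"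
    "real k * snd y - 1 < snd (real k *\<^sub>R mset_average k n A X)"
    unfolding kavg y using box j by (auto simp: mem_Times_iff intro!: round)
  with X \<open>k > 0\<close> that show ?thesis
    by (simp add: field_simps)
qed

theorem proposition4:
  fixes S1 :: "nat \<Rightarrow> 's1 set" and S2 :: "nat \<Rightarrow> 's2 set"
    and f :: "nat \<Rightarrow> 's1 \<Rightarrow> 's2 \<Rightarrow> nat \<Rightarrow> real"
    and \<delta> :: real and k :: nat and e :: "nat \<Rightarrow> nat \<Rightarrow> nat multiset"
  assumes "mechanism S1 S2 f"
    and "pareto_eff_all_eq S1 S2 f \<delta>"
    and "k > 0"
    and "\<forall>n. bij_betw (e n) {..<num_kun k n} (kmsets k n)"
  shows "close_frontier_all_eq (Mk_S1 S1 k) (Mk_S2 S2 k) (Mk_f f k e) (\<delta> + 1 / real k)"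
  unfolding close_frontier_all_eq_def eps_close_frontier_def
proof (intro allI impI ballI notI)
  fix n A x
  assume A: "collection n A" and "x \<in> NEO (Mk_S1 S1 k) (Mk_S2 S2 k) (Mk_f f k e) n A"
  then have "x \<in> NEO S1 S2 f (num_kun k n) (kUN k e n A)"
    by (simp add: NEO_Mk)
  then have efficient: "eps_pareto_eff \<delta> (num_kun k n) (kUN k e n A) x"
    using assms(2-4) collection_kUN[OF A] unfolding pareto_eff_all_eq_def by blast
  assume "\<exists>y\<in>convex hull (A ` {..<n}). fst x + (\<delta> + 1 / real k) < fst y \<and> snd x + (\<delta> + 1 / real k) < snd y"
  then obtain y where "y \<in> convex hull (A ` {..<n})"
    and y: "fst x + (\<delta> + 1 / real k) < fst y" "snd x + (\<delta> + 1 / real k) < snd y"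
    by blast
  then obtain X where "X \<in> kmsets k n"
    and X: "fst y - 1 / real k < fst (mset_average k n A X)" "snd y - 1 / real k < snd (mset_average k n A X)"
    using convex_hull_approx_by_mset_average A \<open>k > 0\<close> unfolding collection_def by metis
  then obtain l where "l < num_kun k n" "e n l = X"
    using bij_betw_imp_surj_on assms(4) by (metis imageE lessThan_iff)
  with X y efficient show False
    unfolding eps_pareto_eff_def kUN_eq_mset_average by fastforce
qed

end
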